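(* In the setting described in the context, let $Q(k)=W(k)-H\bar H W(k)$ and $\gamma=\lambda_{\max}\big(\mathbb{E}[Q(k)^TQ(k)]\big)$. Then $\gamma<1$.
   Context: Let $V=\{1,\ldots,N\}$, $N\ge 2$, and let $G_I=(V,E_I)$ be a connected undirected graph which is not complete, with adjacency matrix $A$; let $B=A+I_N$. For $i\in V$ let $N_I(i)$ be the set of neighbors of $i$ in $G_I$, $\tilde N_I(i)=N_I(i)\cup\{i\}$, $m_i=\deg_{G_I}(i)+1$, $m=\sum_{i=1}^N m_i$. For $i,j\in V$ set $s_{ij}=\sum_{l=1}^{j}B(i,l)+\sum_{r=1}^{i-1}m_r$ (the last sum is $0$ for $i=1$). Let $e_1,\ldots,e_m$ be the standard basis of $\mathbb{R}^m$ and define $E_j^i=e_{s_{ij}}$ if $j\in\tilde N_I(i)$ and $E_j^i=\mathbf{0}_m$ otherwise. Let $H=\big[\sum_{i=1}^N E_1^i,\ldots,\sum_{i=1}^N E_N^i\big]\in\mathbb{R}^{m\times N}$ and $\bar H=\mathrm{diag}(1/m_1,\ldots,1/m_N)H^T$. Let $G_C=(V,E_C)$ be a communication graph with $G_m\subseteq G_C\subseteq G_I$, where $G_m$ is a maximal triangle-free spanning subgraph of $G_I$ (a triangle-free spanning subgraph such that adding any edge of $G_I$ not in it creates a triangle); $N_C(i)$ denotes the neighbors of $i$ in $G_C$. For $i,j\in V$ let $\mathrm{ind}(i,j)=\tilde N_I(i)\cap\tilde N_I(j)$ and $W_{ij}=I_m-\tfrac12\sum_{l\in \mathrm{ind}(i,j)}(E_l^{i}-E_l^{j})(E_l^{i}-E_l^{j})^T$.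 The random matrix $W(k)$ is $W_{i_kj_k}$, where $i_k$ is drawn uniformly at random from $V$ and then $j_k$ is drawn uniformly at random from $N_C(i_k)$; the expectation is with respect to this random choice. *)

theory Defs
  imports "Jordan_Normal_Form.Char_Poly"
begin

text \<open>Matrix/vector indices are 0-based
  in the library, so the paper's basis vector e_k is unit_vec m (k-1).\<close>

definition undirected_graph :: "nat \<Rightarrow> (nat \<Rightarrow> nat \<Rightarrow> bool) \<Rightarrow> bool" where
  "undirected_graph N E \<longleftrightarrow>
     (\<forall>i j. E i j \<longrightarrow> i \<in> {1..N} \<and> j \<in> {1..N}) \<and>
     (\<forall>i j. E i j \<longrightarrow> E j i) \<and> (\<forall>i. \<not> E i i)"

definition connected_graph :: "nat \<Rightarrow> (nat \<Rightarrow> nat \<Rightarrow> bool) \<Rightarrow> bool" where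
  "connected_graph N E \<longleftrightarrow> (\<forall>i\<in>{1..N}. \<forall>j\<in>{1..N}. E\<^sup>*\<^sup>* i j)"

definition complete_graph :: "nat \<Rightarrow> (nat \<Rightarrow> nat \<Rightarrow> bool) \<Rightarrow> bool" where
  "complete_graph N E \<longleftrightarrow> (\<forall>i\<in>{1..N}. \<forall>j\<in>{1..N}. i \<noteq> j \<longrightarrow> E i j)"

definition spanning_subgraph :: "nat \<Rightarrow> (nat \<Rightarrow> nat \<Rightarrow> bool) \<Rightarrow> (nat \<Rightarrow> nat \<Rightarrow> bool) \<Rightarrow> bool" where
  "spanning_subgraph N F E \<longleftrightarrow> undirected_graph N F \<and> (\<forall>i j. F i j \<longrightarrow> E i j)"

definition triangle_free :: "(nat \<Rightarrow> nat \<Rightarrow> bool) \<Rightarrow> bool" where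
  "triangle_free F \<longleftrightarrow> \<not> (\<exists>a b c. F a b \<and> F b c \<and> F a c)"

text \<open>Maximal triangle-free spanning subgraph: adding any edge of E not in F creates a triangle.\<close>
definition maximal_triangle_free_spanning_subgraph ::
    "nat \<Rightarrow> (nat \<Rightarrow> nat \<Rightarrow> bool) \<Rightarrow> (nat \<Rightarrow> nat \<Rightarrow> bool) \<Rightarrow> bool" where
  "maximal_triangle_free_spanning_subgraph N F E \<longleftrightarrow>
     spanning_subgraph N F E \<and> triangle_free F \<and>
     (\<forall>a b. E a b \<and> \<not> F a b \<longrightarrow> (\<exists>c. F a c \<and> F c b))"

definition nbr :: "nat \<Rightarrow> (nat \<Rightarrow> nat \<Rightarrow> bool) \<Rightarrow> nat \<Rightarrow> nat set" where
  "nbr N E i = {j \<in> {1..N}. E i j}"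

definition cnbr :: "nat \<Rightarrow> (nat \<Rightarrow> nat \<Rightarrow> bool) \<Rightarrow> nat \<Rightarrow> nat set" where
  "cnbr N E i = insert i (nbr N E i)"

definition Bmat :: "nat \<Rightarrow> (nat \<Rightarrow> nat \<Rightarrow> bool) \<Rightarrow> nat \<Rightarrow> nat \<Rightarrow> nat" where
  "Bmat N E i l = (if E i l then 1 else 0) + (if i = l then 1 else 0)"

definition mdeg :: "nat \<Rightarrow> (nat \<Rightarrow> nat \<Rightarrow> bool) \<Rightarrow> nat \<Rightarrow> nat" where
  "mdeg N E i = card (nbr N E i) + 1"

definition mtot :: "nat \<Rightarrow> (nat \<Rightarrow> nat \<Rightarrow> bool) \<Rightarrow> nat" where
  "mtot N E = (\<Sum>i=1..N. mdeg N E i)"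

definition sidx :: "nat \<Rightarrow> (nat \<Rightarrow> nat \<Rightarrow> bool) \<Rightarrow> nat \<Rightarrow> nat \<Rightarrow> nat" where
  "sidx N E i j = (\<Sum>l=1..j. Bmat N E i l) + (\<Sum>r=1..i-1. mdeg N E r)"

definition Evec :: "nat \<Rightarrow> (nat \<Rightarrow> nat \<Rightarrow> bool) \<Rightarrow> nat \<Rightarrow> nat \<Rightarrow> real vec" where
  "Evec N E i j = (if j \<in> cnbr N E i then unit_vec (mtot N E) (sidx N E i j - 1)
                   else 0\<^sub>v (mtot N E))"

definition Hmat :: "nat \<Rightarrow> (nat \<Rightarrow> nat \<Rightarrow> bool) \<Rightarrow> real mat" where
  "Hmat N E = mat (mtot N E) N (\<lambda>(r, c). \<Sum>i=1..N. Evec N E i (c + 1) $ r)"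

definition Hbar :: "nat \<Rightarrow> (nat \<Rightarrow> nat \<Rightarrow> bool) \<Rightarrow> real mat" where
  "Hbar N E = mat N (mtot N E) (\<lambda>(r, c). (1 / real (mdeg N E (r + 1))) * Hmat N E $$ (c, r))"

definition ind :: "nat \<Rightarrow> (nat \<Rightarrow> nat \<Rightarrow> bool) \<Rightarrow> nat \<Rightarrow> nat \<Rightarrow> nat set" where
  "ind N E i j = cnbr N E i \<inter> cnbr N E j"

text \<open>W_ij = I_m - 1/2 sum_{l in ind(i,j)} (E_l^i - E_l^j)(E_l^i - E_l^j)^T, written entrywise\<close>
definition Wmat :: "nat \<Rightarrow> (nat \<Rightarrow> nat \<Rightarrow> bool) \<Rightarrow> nat \<Rightarrow> nat \<Rightarrow> real mat" where
  "Wmat N E i j = mat (mtot N E) (mtot N E) (\<lambda>(r, c).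
      (if r = c then 1 else 0) - 1/2 * (\<Sum>l\<in>ind N E i j.
          (Evec N E i l $ r - Evec N E j l $ r) * (Evec N E i l $ c - Evec N E j l $ c)))"

definition Qmat :: "nat \<Rightarrow> (nat \<Rightarrow> nat \<Rightarrow> bool) \<Rightarrow> nat \<Rightarrow> nat \<Rightarrow> real mat" where
  "Qmat N E i j = Wmat N E i j - Hmat N E * Hbar N E * Wmat N E i j"

text \<open>E[Q^T Q]: i uniform on V, then j uniform on N_C(i) (neighbours in the communication graph EC).\<close>
definition EQTQ :: "nat \<Rightarrow> (nat \<Rightarrow> nat \<Rightarrow> bool) \<Rightarrow> (nat \<Rightarrow> nat \<Rightarrow> bool) \<Rightarrow> real mat" where
  "EQTQ N EI EC = mat (mtot N EI) (mtot N EI) (\<lambda>(r, c).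
      \<Sum>i=1..N. \<Sum>j\<in>nbr N EC i.
         (1 / (real N * real (card (nbr N EC i)))) *
         (transpose_mat (Qmat N EI i j) * Qmat N EI i j) $$ (r, c))"

definition lambda_max :: "real mat \<Rightarrow> real" where
  "lambda_max M = Max {k. eigenvalue M k}"

end

theory Submission
  imports Defs
begin

text \<open>The coordinates of \<open>\<real>\<^sup>m\<close> are the pairs \<open>(i, l)\<close> with \<open>l \<in> cnbr N E i\<close>; coordinate \<open>(i, l)\<close>
  is agent \<open>i\<close>'s copy of the value at node \<open>l\<close>. \<open>W\<^sub>i\<^sub>j\<close> replaces the copies shared by \<open>i\<close> and \<open>j\<close>
  by their average; it is an orthogonal projection, so \<open>\<parallel>W\<^sub>i\<^sub>j v\<parallel>\<^sup>2 = \<parallel>v\<parallel>\<^sup>2 - \<Sum>\<^sub>l (v\<^sub>i\<^sub>l - v\<^sub>j\<^sub>l)\<^sup>2/2\<close>.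
  \<open>I - H H\<^sub>b\<^sub>a\<^sub>r\<close> subtracts from every copy of node \<open>l\<close> the mean of all copies of \<open>l\<close>, which removes
  \<open>\<Sum>\<^sub>l m\<^sub>l mean\<^sub>l\<^sup>2\<close> from the squared norm. Hence \<open>v\<^sup>T E[Q\<^sup>TQ] v = \<Sum> p\<^sub>i\<^sub>j \<parallel>Q\<^sub>i\<^sub>j v\<parallel>\<^sup>2 \<le> \<parallel>v\<parallel>\<^sup>2\<close>,
  and for an eigenvector with eigenvalue \<open>\<ge> 1\<close> every loss term vanishes: copies agree across
  communication edges and all means are zero. Every edge of \<open>G\<^sub>I\<close> is an edge or a path of
  length two in \<open>G\<^sub>m \<subseteq> G\<^sub>C\<close>, so all copies of a node agree, hence vanish, and \<open>v = 0\<close>.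
  The spectrum is nonempty since \<open>H z\<close> lies in the kernel of every \<open>Q\<^sub>i\<^sub>j\<close>.\<close>

lemma mult_mat_vec_index_sum:
  assumes "A \<in> carrier_mat n k" "v \<in> carrier_vec k" "r < n"
  shows "(A *\<^sub>v v) $ r = (\<Sum>c<k. A $$ (r, c) * v $ c)"
  using assms by (auto simp: scalar_prod_def row_def lessThan_atLeast0 intro!: sum.cong)

lemma scalar_prod_sum_lessThan:
  "v \<in> carrier_vec n \<Longrightarrow> w \<in> carrier_vec n \<Longrightarrow> v \<bullet> w = (\<Sum>r<n. v $ r * w $ r)"
  by (auto simp: scalar_prod_def lessThan_atLeast0)

lemma quadratic_form_transpose_mult:
  fixes A :: "real mat"
  assumes A: "A \<in> carrier_mat k n" and v: "v \<in> carrier_vec n"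
  shows "(\<Sum>r<n. v $ r * ((transpose_mat A * A) *\<^sub>v v) $ r) = (\<Sum>r<k. ((A *\<^sub>v v) $ r)\<^sup>2)"
proof -
  have Av: "A *\<^sub>v v \<in> carrier_vec k" using A v by simp
  have tAv: "transpose_mat A *\<^sub>v (A *\<^sub>v v) \<in> carrier_vec n"
    using A Av by (metis mult_mat_vec_carrier transpose_carrier_mat)
  have "(\<Sum>r<n. v $ r * ((transpose_mat A * A) *\<^sub>v v) $ r) = v \<bullet> (transpose_mat A *\<^sub>v (A *\<^sub>v v))"
    using scalar_prod_sum_lessThan[OF v tAv] A v by simp
  also have "\<dots> = (transpose_mat A *\<^sub>v (A *\<^sub>v v)) \<bullet> v"
    by (rule comm_scalar_prod[OF v tAv])
  also have "\<dots> = (A *\<^sub>v v) \<bullet> (A *\<^sub>v v)"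
    by (rule transpose_vec_mult_scalar[OF A v Av])
  also have "\<dots> = (\<Sum>r<k. ((A *\<^sub>v v) $ r)\<^sup>2)"
    using scalar_prod_sum_lessThan[OF Av Av] by (simp add: power2_eq_square)
  finally show ?thesis .
qed

lemma finite_eigenvalues:
  fixes A :: "'a :: field mat"
  assumes "A \<in> carrier_mat n n"
  shows "finite {k. eigenvalue A k}"
proof -
  have "char_poly A \<noteq> 0" using degree_monic_char_poly[OF assms] by auto
  then have "finite {k. poly (char_poly A) k = 0}" by (rule poly_roots_finite)
  then show ?thesis using eigenvalue_root_char_poly[OF assms] by simp
qed

lemma sum_sq_deviation_mean:
  fixes f :: "'a \<Rightarrow> real"
  assumes "finite C" "card C = n" "n > 0"
  shows "(\<Sum>i\<in>C. (f i - (\<Sum>i\<in>C. f i) / n)\<^sup>2) = (\<Sum>i\<in>C. (f i)\<^sup>2) - n * ((\<Sum>i\<in>C. f i) / n)\<^sup>2"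
proof -
  define \<mu> where "\<mu> = (\<Sum>i\<in>C. f i) / n"
  have sum_f: "(\<Sum>i\<in>C. f i) = n * \<mu>" unfolding \<mu>_def using assms by simp
  have "(\<Sum>i\<in>C. (f i - \<mu>)\<^sup>2) = (\<Sum>i\<in>C. (f i)\<^sup>2 - 2 * \<mu> * f i + \<mu>\<^sup>2)"
    by (rule sum.cong) (auto simp: power2_eq_square algebra_simps)
  also have "\<dots> = (\<Sum>i\<in>C. (f i)\<^sup>2) - 2 * \<mu> * (\<Sum>i\<in>C. f i) + n * \<mu>\<^sup>2"
    using assms by (simp add: sum.distrib sum_subtractf sum_distrib_left)
  also have "\<dots> = (\<Sum>i\<in>C. (f i)\<^sup>2) - n * \<mu>\<^sup>2" unfolding sum_f by (simp add: power2_eq_square)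
  finally show ?thesis unfolding \<mu>_def .
qed

text \<open>With \<open>u\<^sub>l/\<surd>2\<close> orthonormal, \<open>x - \<Sum>\<^sub>l u\<^sub>l \<langle>u\<^sub>l, x\<rangle>/2\<close> is the orthogonal projection of \<open>x\<close>.\<close>

lemma sum_sq_minus_half_projections:
  fixes u :: "'l \<Rightarrow> nat \<Rightarrow> real" and x :: "nat \<Rightarrow> real"
  assumes L: "finite L"
    and orth: "\<And>l l'. l \<in> L \<Longrightarrow> l' \<in> L \<Longrightarrow> (\<Sum>r<n. u l r * u l' r) = (if l = l' then 2 else 0)"
    and a: "\<And>l. l \<in> L \<Longrightarrow> a l = (\<Sum>c<n. u l c * x c)"
  shows "(\<Sum>r<n. (x r - 1/2 * (\<Sum>l\<in>L. u l r * a l))\<^sup>2) = (\<Sum>r<n. (x r)\<^sup>2) - 1/2 * (\<Sum>l\<in>L. (a l)\<^sup>2)"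
proof -
  define S where "S r = (\<Sum>l\<in>L. u l r * a l)" for r
  have "(\<Sum>r<n. (x r - 1/2 * S r)\<^sup>2) = (\<Sum>r<n. (x r)\<^sup>2 - x r * S r + 1/4 * (S r * S r))"
    by (rule sum.cong) (auto simp: power2_eq_square algebra_simps)
  also have "\<dots> = (\<Sum>r<n. (x r)\<^sup>2) - (\<Sum>r<n. x r * S r) + 1/4 * (\<Sum>r<n. S r * S r)"
    by (simp add: sum.distrib sum_subtractf sum_distrib_left)
  also have "(\<Sum>r<n. x r * S r) = (\<Sum>r<n. \<Sum>l\<in>L. a l * (u l r * x r))"
    unfolding S_def by (simp add: sum_distrib_left mult_ac)
  also have "\<dots> = (\<Sum>l\<in>L. a l * (\<Sum>r<n. u l r * x r))"
    by (subst sum.swap) (simp add: sum_distrib_left)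
  also have "\<dots> = (\<Sum>l\<in>L. (a l)\<^sup>2)"
    by (rule sum.cong) (simp_all add: a power2_eq_square mult_ac)
  also have "(\<Sum>r<n. S r * S r) = (\<Sum>r<n. \<Sum>l\<in>L. \<Sum>l'\<in>L. a l * a l' * (u l r * u l' r))"
    unfolding S_def by (rule sum.cong) (auto simp: sum_product mult_ac)
  also have "\<dots> = (\<Sum>l\<in>L. \<Sum>r<n. \<Sum>l'\<in>L. a l * a l' * (u l r * u l' r))"
    by (rule sum.swap)
  also have "\<dots> = (\<Sum>l\<in>L. \<Sum>l'\<in>L. a l * a l' * (\<Sum>r<n. u l r * u l' r))"
    by (intro sum.cong refl) (subst sum.swap, simp add: sum_distrib_left)
  also have "\<dots> = (\<Sum>l\<in>L. \<Sum>l'\<in>L. if l' = l then 2 * (a l)\<^sup>2 else 0)"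
    by (intro sum.cong refl) (auto simp: orth power2_eq_square)
  also have "\<dots> = 2 * (\<Sum>l\<in>L. (a l)\<^sup>2)"
    using L by (simp add: sum.delta sum_distrib_left)
  finally show ?thesis unfolding S_def by simp
qed

lemma sum_sum_pos_weights_deficits_eq_0:
  fixes p D :: "'a \<Rightarrow> 'b \<Rightarrow> real"
  assumes fin: "finite I" "\<And>i. i \<in> I \<Longrightarrow> finite (J i)"
    and p_pos: "\<And>i j. i \<in> I \<Longrightarrow> j \<in> J i \<Longrightarrow> p i j > 0"
    and D_nonneg: "\<And>i j. i \<in> I \<Longrightarrow> j \<in> J i \<Longrightarrow> D i j \<ge> 0"
    and p_sum: "(\<Sum>i\<in>I. \<Sum>j\<in>J i. p i j) \<le> 1"
    and "1 \<le> k" "0 \<le> n"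
    and balance: "k * n = (\<Sum>i\<in>I. \<Sum>j\<in>J i. p i j * (n - D i j))"
    and ij: "i \<in> I" "j \<in> J i"
  shows "D i j = 0"
proof -
  have nonneg: "\<And>i j. i \<in> I \<Longrightarrow> j \<in> J i \<Longrightarrow> p i j * D i j \<ge> 0"
    using p_pos D_nonneg by (meson less_imp_le mult_nonneg_nonneg)
  have "(\<Sum>i\<in>I. \<Sum>j\<in>J i. p i j * D i j) = (\<Sum>i\<in>I. \<Sum>j\<in>J i. p i j) * n - k * n"
    unfolding balance by (simp add: algebra_simps sum_subtractf sum_distrib_right sum_distrib_left)
  also have "\<dots> \<le> 0"
    using mult_right_mono[OF p_sum \<open>0 \<le> n\<close>] mult_right_mono[OF \<open>1 \<le> k\<close> \<open>0 \<le> n\<close>] by linarith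
  finally have "(\<Sum>i\<in>I. \<Sum>j\<in>J i. p i j * D i j) = 0"
    using nonneg by (smt (verit) sum_nonneg)
  then have "(\<Sum>j\<in>J i. p i j * D i j) = 0"
    using fin nonneg ij by (subst (asm) sum_nonneg_eq_0_iff) (auto intro: sum_nonneg)
  then have "p i j * D i j = 0"
    using fin nonneg ij by (subst (asm) sum_nonneg_eq_0_iff) auto
  then show ?thesis using p_pos[OF ij] by simp
qed

lemma Hmat_carrier [simp]: "Hmat N E \<in> carrier_mat (mtot N E) N"
  unfolding Hmat_def by simp

lemma Hbar_carrier [simp]: "Hbar N E \<in> carrier_mat N (mtot N E)"
  unfolding Hbar_def by simp

lemma Wmat_carrier [simp]: "Wmat N E i j \<in> carrier_mat (mtot N E) (mtot N E)"
  unfolding Wmat_def by simp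

lemma Qmat_carrier [simp]: "Qmat N E i j \<in> carrier_mat (mtot N E) (mtot N E)"
  unfolding Qmat_def by (meson Hmat_carrier Hbar_carrier Wmat_carrier mult_carrier_mat minus_carrier_mat)

lemma EQTQ_carrier [simp]: "EQTQ N EI EC \<in> carrier_mat (mtot N EI) (mtot N EI)"
  unfolding EQTQ_def by simp

lemma sampling_weight_pos:
  assumes "1 \<le> N" "j \<in> nbr N C i"
  shows "1 / (N * card (nbr N C i)) > (0 :: real)"
proof -
  have "finite (nbr N C i)" unfolding nbr_def by simp
  then have "card (nbr N C i) > 0" using assms(2) card_gt_0_iff by blast
  then show ?thesis using assms(1) by simp
qed

lemma sampling_weights_sum_le_1:
  assumes "1 \<le> N"
  shows "(\<Sum>i\<in>{1..N}. \<Sum>j\<in>nbr N C i. 1 / (N * card (nbr N C i))) \<le> (1 :: real)"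
proof -
  have "(\<Sum>j\<in>nbr N C i. 1 / (N * card (nbr N C i))) \<le> 1 / (N :: real)" for i
    by (cases "card (nbr N C i) = 0") auto
  then have "(\<Sum>i\<in>{1..N}. \<Sum>j\<in>nbr N C i. 1 / (N * card (nbr N C i))) \<le> (\<Sum>i\<in>{1..N}. 1 / (N :: real))"
    by (rule sum_mono)
  then show ?thesis using assms by simp
qed

locale ugraph =
  fixes N :: nat and E :: "nat \<Rightarrow> nat \<Rightarrow> bool"
  assumes undirected: "undirected_graph N E"
begin

abbreviation m :: nat where "m \<equiv> mtot N E"

text \<open>The 0-based coordinate of \<open>e\<^sub>s\<^sub>i\<^sub>l\<close>.\<close>
definition slot :: "nat \<Rightarrow> nat \<Rightarrow> nat" where
  "slot i l = sidx N E i l - 1"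

definition slot_offset :: "nat \<Rightarrow> nat" where
  "slot_offset i = (\<Sum>r=1..i-1. mdeg N E r)"

definition cnbr_rank :: "nat \<Rightarrow> nat \<Rightarrow> nat" where
  "cnbr_rank i l = card (cnbr N E i \<inter> {1..l})"

lemma E_range: "E i j \<Longrightarrow> i \<in> {1..N} \<and> j \<in> {1..N}"
  using undirected unfolding undirected_graph_def by blast

lemma E_sym: "E i j \<Longrightarrow> E j i"
  using undirected unfolding undirected_graph_def by blast

lemma E_irrefl: "\<not> E i i"
  using undirected unfolding undirected_graph_def by blast

lemma finite_cnbr [simp]: "finite (cnbr N E i)"
  unfolding cnbr_def nbr_def by simp

lemma cnbr_subset: "i \<in> {1..N} \<Longrightarrow> cnbr N E i \<subseteq> {1..N}"
  unfolding cnbr_def nbr_def by auto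

lemma card_cnbr: "card (cnbr N E i) = mdeg N E i"
proof -
  have "i \<notin> nbr N E i" using E_irrefl unfolding nbr_def by auto
  then show ?thesis unfolding cnbr_def mdeg_def nbr_def by simp
qed

lemma mdeg_pos: "mdeg N E i > 0"
  unfolding mdeg_def by simp

lemma mem_cnbr_iff: "i \<in> {1..N} \<Longrightarrow> l \<in> cnbr N E i \<longleftrightarrow> l = i \<or> E i l"
  unfolding cnbr_def nbr_def using E_range by auto

lemma cnbr_sym: "i \<in> {1..N} \<Longrightarrow> l \<in> cnbr N E i \<Longrightarrow> i \<in> cnbr N E l"
  using mem_cnbr_iff E_range E_sym cnbr_subset by (metis in_mono)

lemma self_mem_cnbr: "i \<in> cnbr N E i"
  unfolding cnbr_def by simp

lemma slot_eq: assumes "i \<in> {1..N}" shows "slot i l = slot_offset i + cnbr_rank i l - 1"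
proof -
  have "Bmat N E i l' = (if l' \<in> cnbr N E i then 1 else 0)" for l'
    unfolding Bmat_def using mem_cnbr_iff[OF assms, of l'] E_irrefl by auto
  then have "(\<Sum>l'=1..l. Bmat N E i l') = card ({1..l} \<inter> cnbr N E i)"
    by (simp add: sum.inter_restrict[symmetric])
  then show ?thesis
    unfolding slot_def sidx_def slot_offset_def cnbr_rank_def by (simp add: Int_commute)
qed

lemma cnbr_rank_bounds:
  assumes "i \<in> {1..N}" "l \<in> cnbr N E i"
  shows "1 \<le> cnbr_rank i l" "cnbr_rank i l \<le> mdeg N E i"
proof -
  have "l \<in> cnbr N E i \<inter> {1..l}" using assms cnbr_subset[OF assms(1)] by auto
  then show "1 \<le> cnbr_rank i l" unfolding cnbr_rank_def
    by (metis One_nat_def Suc_leI card_gt_0_iff empty_iff finite_Int finite_atLeastAtMost)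
  show "cnbr_rank i l \<le> mdeg N E i" unfolding cnbr_rank_def card_cnbr[symmetric]
    by (rule card_mono) auto
qed

lemma cnbr_rank_strict_mono:
  assumes "i \<in> {1..N}" "l' \<in> cnbr N E i" "l < l'"
  shows "cnbr_rank i l < cnbr_rank i l'"
  unfolding cnbr_rank_def
proof (rule psubset_card_mono)
  have "l' \<in> cnbr N E i \<inter> {1..l'}" "l' \<notin> cnbr N E i \<inter> {1..l}"
    using assms cnbr_subset[OF assms(1)] by auto
  moreover have "cnbr N E i \<inter> {1..l} \<subseteq> cnbr N E i \<inter> {1..l'}" using assms by auto
  ultimately show "cnbr N E i \<inter> {1..l} \<subset> cnbr N E i \<inter> {1..l'}" by blast
qed simp

lemma slot_offset_Suc: "1 \<le> i \<Longrightarrow> slot_offset (Suc i) = slot_offset i + mdeg N E i"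
  unfolding slot_offset_def by (cases i) auto

lemma slot_offset_mono: "1 \<le> i \<Longrightarrow> i < i' \<Longrightarrow> slot_offset i + mdeg N E i \<le> slot_offset i'"
proof (induction i')
  case (Suc n)
  then show ?case
    using slot_offset_Suc[of i] slot_offset_Suc[of n] by (cases "i = n") auto
qed simp

lemma slot_bounds:
  assumes "i \<in> {1..N}" "l \<in> cnbr N E i"
  shows "slot_offset i \<le> slot i l" "slot i l < slot_offset i + mdeg N E i"
  using slot_eq[OF assms(1)] cnbr_rank_bounds[OF assms] by auto

lemma slot_lt_m: assumes "i \<in> {1..N}" "l \<in> cnbr N E i" shows "slot i l < m"
proof -
  have "slot_offset i + mdeg N E i \<le> slot_offset (Suc N)"
    using assms(1) slot_offset_mono[of i "Suc N"] by auto
  then show ?thesis using slot_bounds[OF assms] unfolding mtot_def slot_offset_def by simp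
qed

lemma slot_inj:
  assumes "i \<in> {1..N}" "l \<in> cnbr N E i" "i' \<in> {1..N}" "l' \<in> cnbr N E i'"
    and "slot i l = slot i' l'"
  shows "i = i' \<and> l = l'"
proof -
  have "i = i'"
    using slot_offset_mono[of i i'] slot_offset_mono[of i' i]
      slot_bounds[OF assms(1,2)] slot_bounds[OF assms(3,4)] assms
    by (metis atLeastAtMost_iff le_trans linorder_neqE_nat not_le)
  moreover have "cnbr_rank i l = cnbr_rank i l'"
    using slot_eq[OF assms(1)] cnbr_rank_bounds[OF assms(1,2)] cnbr_rank_bounds[OF assms(3,4)]
      assms(5) \<open>i = i'\<close> by (simp add: slot_eq)
  then have "l = l'"
    using cnbr_rank_strict_mono[of i l' l] cnbr_rank_strict_mono[of i l l'] assms \<open>i = i'\<close>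
    by (metis less_irrefl nat_neq_iff)
  ultimately show ?thesis by simp
qed

lemma bij_betw_slot: "bij_betw (\<lambda>(i, l). slot i l) (Sigma {1..N} (cnbr N E)) {..<m}"
proof -
  have inj: "inj_on (\<lambda>(i, l). slot i l) (Sigma {1..N} (cnbr N E))"
    unfolding inj_on_def using slot_inj by auto
  have "(\<lambda>(i, l). slot i l) ` Sigma {1..N} (cnbr N E) = {..<m}"
  proof (rule card_subset_eq)
    show "(\<lambda>(i, l). slot i l) ` Sigma {1..N} (cnbr N E) \<subseteq> {..<m}"
      using slot_lt_m by auto
    show "card ((\<lambda>(i, l). slot i l) ` Sigma {1..N} (cnbr N E)) = card {..<m}"
      using card_image[OF inj] by (simp add: card_cnbr mtot_def)
  qed simp
  with inj show ?thesis unfolding bij_betw_def by simp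
qed

lemma sum_over_slots: "(\<Sum>r<m. f r) = (\<Sum>i=1..N. \<Sum>l\<in>cnbr N E i. f (slot i l))"
proof -
  have "(\<Sum>r<m. f r) = (\<Sum>(i, l)\<in>Sigma {1..N} (cnbr N E). f (slot i l))"
    using sum.reindex_bij_betw[OF bij_betw_slot, of f] by (simp add: case_prod_beta')
  also have "\<dots> = (\<Sum>i=1..N. \<Sum>l\<in>cnbr N E i. f (slot i l))"
    by (rule sum.Sigma[symmetric]) auto
  finally show ?thesis .
qed

lemma slot_vec_eq_zeroI:
  assumes "v \<in> carrier_vec m" "\<And>i l. i \<in> {1..N} \<Longrightarrow> l \<in> cnbr N E i \<Longrightarrow> v $ slot i l = 0"
  shows "v = 0\<^sub>v m"
proof (rule eq_vecI)
  fix r assume "r < dim_vec (0\<^sub>v m)"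
  then have "r \<in> (\<lambda>(i, l). slot i l) ` Sigma {1..N} (cnbr N E)"
    using bij_betw_slot unfolding bij_betw_def by simp
  then show "v $ r = 0\<^sub>v m $ r" using assms \<open>r < dim_vec (0\<^sub>v m)\<close> by auto
qed (use assms in simp)

lemma Evec_index:
  "i \<in> {1..N} \<Longrightarrow> l \<in> cnbr N E i \<Longrightarrow> r < m \<Longrightarrow> Evec N E i l $ r = (if r = slot i l then 1 else 0)"
  unfolding Evec_def slot_def by (auto simp: unit_vec_def)

lemma Evec_index_notin: "l \<notin> cnbr N E i \<Longrightarrow> r < m \<Longrightarrow> Evec N E i l $ r = 0"
  unfolding Evec_def by auto

lemma Evec_diff_sum:
  assumes "i \<in> {1..N}" "j \<in> {1..N}" "l \<in> ind N E i j"
  shows "(\<Sum>c<m. (Evec N E i l $ c - Evec N E j l $ c) * x c) = x (slot i l) - x (slot j l)"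
proof -
  have l: "l \<in> cnbr N E i" "l \<in> cnbr N E j" using assms(3) unfolding ind_def by auto
  have "(\<Sum>c<m. (Evec N E i l $ c - Evec N E j l $ c) * x c)
      = (\<Sum>c<m. (if c = slot i l then x c else 0) - (if c = slot j l then x c else 0))"
    by (rule sum.cong) (auto simp: Evec_index[OF assms(1) l(1)] Evec_index[OF assms(2) l(2)])
  then show ?thesis using slot_lt_m assms l by (simp add: sum_subtractf)
qed

lemma Evec_diff_orthogonal:
  assumes "i \<in> {1..N}" "j \<in> {1..N}" "i \<noteq> j" "l \<in> ind N E i j" "l' \<in> ind N E i j"
  shows "(\<Sum>r<m. (Evec N E i l $ r - Evec N E j l $ r) * (Evec N E i l' $ r - Evec N E j l' $ r))
    = (if l = l' then 2 else 0)"
proof -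
  have l: "l \<in> cnbr N E i" "l \<in> cnbr N E j" "l' \<in> cnbr N E i" "l' \<in> cnbr N E j"
    using assms(4,5) unfolding ind_def by auto
  have "slot i l = slot i l' \<longleftrightarrow> l = l'" "slot j l = slot j l' \<longleftrightarrow> l = l'"
    "slot i l \<noteq> slot j l'" "slot j l \<noteq> slot i l'"
    using slot_inj assms l by metis+
  then show ?thesis
    using Evec_diff_sum[OF assms(1,2,4)] slot_lt_m assms l by (simp add: Evec_index)
qed

lemma W_mult_vec_index:
  assumes "i \<in> {1..N}" "j \<in> {1..N}" "v \<in> carrier_vec m" "r < m"
  shows "(Wmat N E i j *\<^sub>v v) $ r = v $ r - 1/2 *
    (\<Sum>l\<in>ind N E i j. (Evec N E i l $ r - Evec N E j l $ r) * (v $ slot i l - v $ slot j l))"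
proof -
  define u where "u l c = Evec N E i l $ c - Evec N E j l $ c" for l c
  have "(Wmat N E i j *\<^sub>v v) $ r
      = (\<Sum>c<m. ((if r = c then 1 else 0) - 1/2 * (\<Sum>l\<in>ind N E i j. u l r * u l c)) * v $ c)"
    by (subst mult_mat_vec_index_sum[of _ m m]) (auto simp: Wmat_def u_def assms intro!: sum.cong)
  also have "\<dots> = (\<Sum>c<m. (if r = c then v $ c else 0)
      - 1/2 * (\<Sum>l\<in>ind N E i j. u l r * (u l c * v $ c)))"
    by (rule sum.cong) (auto simp: left_diff_distrib right_diff_distrib sum_distrib_left sum_distrib_right mult_ac)
  also have "\<dots> = (\<Sum>c<m. if r = c then v $ c else 0)
      - 1/2 * (\<Sum>c<m. \<Sum>l\<in>ind N E i j. u l r * (u l c * v $ c))"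
    by (simp add: sum_subtractf sum_distrib_left)
  also have "(\<Sum>c<m. \<Sum>l\<in>ind N E i j. u l r * (u l c * v $ c))
      = (\<Sum>l\<in>ind N E i j. u l r * (\<Sum>c<m. u l c * v $ c))"
    by (subst sum.swap) (simp add: sum_distrib_left)
  finally show ?thesis
    using assms Evec_diff_sum[OF assms(1,2), of _ "\<lambda>c. v $ c"] unfolding u_def by simp
qed

lemma W_mult_vec_consensus:
  assumes "i \<in> {1..N}" "j \<in> {1..N}" "v \<in> carrier_vec m"
    and "\<And>l. l \<in> ind N E i j \<Longrightarrow> v $ slot i l = v $ slot j l"
  shows "Wmat N E i j *\<^sub>v v = v"
proof (rule eq_vecI)
  show "dim_vec (Wmat N E i j *\<^sub>v v) = dim_vec v" using assms(3) by (simp add: Wmat_def)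
  fix r assume "r < dim_vec v"
  then show "(Wmat N E i j *\<^sub>v v) $ r = v $ r" using assms by (simp add: W_mult_vec_index)
qed

lemma W_sq_norm:
  assumes "i \<in> {1..N}" "j \<in> {1..N}" "i \<noteq> j" "v \<in> carrier_vec m"
  shows "(\<Sum>r<m. ((Wmat N E i j *\<^sub>v v) $ r)\<^sup>2)
    = (\<Sum>r<m. (v $ r)\<^sup>2) - 1/2 * (\<Sum>l\<in>ind N E i j. (v $ slot i l - v $ slot j l)\<^sup>2)"
proof -
  have "finite (ind N E i j)" unfolding ind_def by simp
  from sum_sq_minus_half_projections[OF this Evec_diff_orthogonal[OF assms(1-3)]
      Evec_diff_sum[OF assms(1,2), symmetric]]
  show ?thesis using assms by (simp add: W_mult_vec_index)
qed

definition copy_mean :: "real vec \<Rightarrow> nat \<Rightarrow> real" where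
  "copy_mean w l = (\<Sum>i\<in>cnbr N E l. w $ slot i l) / mdeg N E l"

lemma H_index:
  assumes "i \<in> {1..N}" "l \<in> cnbr N E i" "c < N"
  shows "Hmat N E $$ (slot i l, c) = (if c = l - 1 then 1 else 0)"
proof -
  have r: "slot i l < m" using slot_lt_m assms by auto
  have l: "l \<in> {1..N}" using cnbr_subset assms by blast
  have "Evec N E i' (c + 1) $ slot i l = (if i' = i \<and> c + 1 = l then 1 else 0)"
    if i': "i' \<in> {1..N}" for i'
  proof (cases "c + 1 \<in> cnbr N E i'")
    case True
    then show ?thesis using Evec_index[OF i' True r] slot_inj[OF i' True assms(1,2)] by auto
  next
    case False
    then show ?thesis using Evec_index_notin[OF False r] assms(2) by auto
  qed
  then have "Hmat N E $$ (slot i l, c) = (\<Sum>i'=1..N. if i' = i \<and> c + 1 = l then 1 else 0)"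
    unfolding Hmat_def using r assms(3) by simp
  then show ?thesis using assms(1) l by (cases "c + 1 = l") auto
qed

lemma H_mult_vec_slot:
  assumes "i \<in> {1..N}" "l \<in> cnbr N E i" "z \<in> carrier_vec N"
  shows "(Hmat N E *\<^sub>v z) $ slot i l = z $ (l - 1)"
proof -
  have "(Hmat N E *\<^sub>v z) $ slot i l = (\<Sum>c<N. Hmat N E $$ (slot i l, c) * z $ c)"
    by (rule mult_mat_vec_index_sum[OF Hmat_carrier assms(3) slot_lt_m[OF assms(1,2)]])
  also have "\<dots> = (\<Sum>c<N. if c = l - 1 then z $ c else 0)"
    by (rule sum.cong) (simp_all add: H_index[OF assms(1,2)])
  also have "\<dots> = z $ (l - 1)"
    using cnbr_subset assms by fastforce
  finally show ?thesis .
qed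

lemma sum_cnbr_transpose:
  assumes "l \<in> {1..N}"
  shows "(\<Sum>i=1..N. if l \<in> cnbr N E i then g i else 0) = (\<Sum>i\<in>cnbr N E l. g i)"
proof -
  have "(\<Sum>i\<in>cnbr N E l. g i) = (\<Sum>i\<in>{1..N} \<inter> cnbr N E l. g i)"
    using cnbr_subset[OF assms] by (metis inf.absorb2)
  also have "\<dots> = (\<Sum>i=1..N. if i \<in> cnbr N E l then g i else 0)"
    by (rule sum.inter_restrict) simp
  also have "\<dots> = (\<Sum>i=1..N. if l \<in> cnbr N E i then g i else 0)"
    by (rule sum.cong) (use cnbr_sym assms in auto)
  finally show ?thesis by simp
qed

lemma sum_cnbr_swap: "(\<Sum>i=1..N. \<Sum>l\<in>cnbr N E i. g i l) = (\<Sum>l=1..N. \<Sum>i\<in>cnbr N E l. g i l)"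
proof -
  have "(\<Sum>l\<in>cnbr N E i. g i l) = (\<Sum>l=1..N. if l \<in> cnbr N E i then g i l else 0)"
    if "i \<in> {1..N}" for i
    using cnbr_subset[OF that] by (simp add: sum.inter_restrict[symmetric] Int_absorb1)
  then have "(\<Sum>i=1..N. \<Sum>l\<in>cnbr N E i. g i l)
      = (\<Sum>i=1..N. \<Sum>l=1..N. if l \<in> cnbr N E i then g i l else 0)"
    by simp
  also have "\<dots> = (\<Sum>l=1..N. \<Sum>i=1..N. if l \<in> cnbr N E i then g i l else 0)"
    by (rule sum.swap)
  also have "\<dots> = (\<Sum>l=1..N. \<Sum>i\<in>cnbr N E l. g i l)"
    by (rule sum.cong[OF refl]) (rule sum_cnbr_transpose)
  finally show ?thesis .
qed

lemma Hbar_mult_vec_index: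
  assumes "w \<in> carrier_vec m" "c < N"
  shows "(Hbar N E *\<^sub>v w) $ c = copy_mean w (c + 1)"
proof -
  have "(Hbar N E *\<^sub>v w) $ c = (\<Sum>r<m. Hmat N E $$ (r, c) * w $ r) / mdeg N E (c + 1)"
    using assms by (subst mult_mat_vec_index_sum[of _ N m])
      (auto simp: Hbar_def sum_divide_distrib intro!: sum.cong)
  also have "(\<Sum>r<m. Hmat N E $$ (r, c) * w $ r)
      = (\<Sum>i=1..N. \<Sum>l\<in>cnbr N E i. Hmat N E $$ (slot i l, c) * w $ slot i l)"
    by (rule sum_over_slots)
  also have "\<dots> = (\<Sum>i=1..N. if c + 1 \<in> cnbr N E i then w $ slot i (c + 1) else 0)"
  proof (intro sum.cong refl)
    fix i assume i: "i \<in> {1..N}"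
    have "Hmat N E $$ (slot i l, c) * w $ slot i l = (if l = c + 1 then w $ slot i l else 0)"
      if "l \<in> cnbr N E i" for l
      using H_index[OF i that assms(2)] cnbr_subset[OF i] that by auto
    then show "(\<Sum>l\<in>cnbr N E i. Hmat N E $$ (slot i l, c) * w $ slot i l)
        = (if c + 1 \<in> cnbr N E i then w $ slot i (c + 1) else 0)"
      by (simp add: sum.delta')
  qed
  also have "\<dots> = (\<Sum>i\<in>cnbr N E (c + 1). w $ slot i (c + 1))"
    by (rule sum_cnbr_transpose) (use assms(2) in auto)
  finally show ?thesis unfolding copy_mean_def .
qed

lemma Hbar_H_mult_vec:
  assumes "z \<in> carrier_vec N"
  shows "Hbar N E *\<^sub>v (Hmat N E *\<^sub>v z) = z"
proof (rule eq_vecI)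
  fix c assume "c < dim_vec z"
  then have c: "c < N" "c + 1 \<in> {1..N}" using assms by auto
  have Hz: "Hmat N E *\<^sub>v z \<in> carrier_vec m" using mult_mat_vec_carrier[OF Hmat_carrier assms] .
  have "(Hmat N E *\<^sub>v z) $ slot i (c + 1) = z $ c" if "i \<in> cnbr N E (c + 1)" for i
    using H_mult_vec_slot[OF _ cnbr_sym[OF c(2) that] assms] cnbr_subset[OF c(2)] that by auto
  then have "(\<Sum>i\<in>cnbr N E (c + 1). (Hmat N E *\<^sub>v z) $ slot i (c + 1)) = mdeg N E (c + 1) * z $ c"
    by (simp add: card_cnbr)
  then show "(Hbar N E *\<^sub>v (Hmat N E *\<^sub>v z)) $ c = z $ c"
    using Hbar_mult_vec_index[OF Hz c(1)] mdeg_pos[of "c + 1"] by (simp add: copy_mean_def)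
qed (use assms in \<open>simp add: Hbar_def\<close>)

lemma H_Hbar_residual_sq_norm:
  assumes "w \<in> carrier_vec m"
  shows "(\<Sum>r<m. ((w - Hmat N E *\<^sub>v (Hbar N E *\<^sub>v w)) $ r)\<^sup>2)
    = (\<Sum>r<m. (w $ r)\<^sup>2) - (\<Sum>l=1..N. mdeg N E l * (copy_mean w l)\<^sup>2)"
proof -
  have Hbar_w: "Hbar N E *\<^sub>v w \<in> carrier_vec N" using mult_mat_vec_carrier[OF Hbar_carrier assms] .
  have residual: "(w - Hmat N E *\<^sub>v (Hbar N E *\<^sub>v w)) $ slot i l = w $ slot i l - copy_mean w l"
    if "i \<in> {1..N}" "l \<in> cnbr N E i" for i l
  proof -
    have l: "l \<in> {1..N}" using cnbr_subset[OF that(1)] that(2) by blast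
    have "(Hmat N E *\<^sub>v (Hbar N E *\<^sub>v w)) $ slot i l = copy_mean w l"
      using H_mult_vec_slot[OF that Hbar_w] Hbar_mult_vec_index[OF assms, of "l - 1"] l by auto
    then show ?thesis using slot_lt_m[OF that] assms by (simp add: carrier_matD[OF Hmat_carrier])
  qed
  have "(\<Sum>r<m. ((w - Hmat N E *\<^sub>v (Hbar N E *\<^sub>v w)) $ r)\<^sup>2)
      = (\<Sum>i=1..N. \<Sum>l\<in>cnbr N E i. (w $ slot i l - copy_mean w l)\<^sup>2)"
    unfolding sum_over_slots by (intro sum.cong refl) (simp add: residual)
  also have "\<dots> = (\<Sum>l=1..N. \<Sum>i\<in>cnbr N E l. (w $ slot i l - copy_mean w l)\<^sup>2)"
    by (rule sum_cnbr_swap)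
  also have "\<dots> = (\<Sum>l=1..N. (\<Sum>i\<in>cnbr N E l. (w $ slot i l)\<^sup>2) - mdeg N E l * (copy_mean w l)\<^sup>2)"
    unfolding copy_mean_def
    by (intro sum.cong refl sum_sq_deviation_mean) (auto simp: card_cnbr mdeg_pos)
  also have "\<dots> = (\<Sum>r<m. (w $ r)\<^sup>2) - (\<Sum>l=1..N. mdeg N E l * (copy_mean w l)\<^sup>2)"
    using sum_cnbr_swap[of "\<lambda>i l. (w $ slot i l)\<^sup>2"] by (simp add: sum_subtractf sum_over_slots)
  finally show ?thesis .
qed

lemma Q_mult_vec:
  assumes "v \<in> carrier_vec m"
  shows "Qmat N E i j *\<^sub>v v = Wmat N E i j *\<^sub>v v - Hmat N E *\<^sub>v (Hbar N E *\<^sub>v (Wmat N E i j *\<^sub>v v))"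
proof -
  have HHbar: "Hmat N E * Hbar N E \<in> carrier_mat m m" by (meson Hmat_carrier Hbar_carrier mult_carrier_mat)
  have Wv: "Wmat N E i j *\<^sub>v v \<in> carrier_vec m" using mult_mat_vec_carrier[OF Wmat_carrier assms] .
  have "(Hmat N E * Hbar N E * Wmat N E i j) *\<^sub>v v = Hmat N E *\<^sub>v (Hbar N E *\<^sub>v (Wmat N E i j *\<^sub>v v))"
    using assoc_mult_mat_vec[OF HHbar Wmat_carrier assms] assoc_mult_mat_vec[OF Hmat_carrier Hbar_carrier Wv]
    by simp
  moreover have "Hmat N E * Hbar N E * Wmat N E i j \<in> carrier_mat m m"
    using HHbar by (meson Wmat_carrier mult_carrier_mat)
  ultimately show ?thesis
    unfolding Qmat_def by (simp add: minus_mult_distrib_mat_vec[OF Wmat_carrier _ assms])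
qed

lemma Q_sq_norm:
  assumes "i \<in> {1..N}" "j \<in> {1..N}" "i \<noteq> j" "v \<in> carrier_vec m"
  shows "(\<Sum>r<m. ((Qmat N E i j *\<^sub>v v) $ r)\<^sup>2) = (\<Sum>r<m. (v $ r)\<^sup>2)
    - 1/2 * (\<Sum>l\<in>ind N E i j. (v $ slot i l - v $ slot j l)\<^sup>2)
    - (\<Sum>l=1..N. mdeg N E l * (copy_mean (Wmat N E i j *\<^sub>v v) l)\<^sup>2)"
  using Q_mult_vec[OF assms(4)] H_Hbar_residual_sq_norm W_sq_norm[OF assms]
    mult_mat_vec_carrier[OF Wmat_carrier assms(4)] by simp

lemma Q_mult_H_vec:
  assumes "i \<in> {1..N}" "j \<in> {1..N}" "z \<in> carrier_vec N"
  shows "Qmat N E i j *\<^sub>v (Hmat N E *\<^sub>v z) = 0\<^sub>v m"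
proof -
  have Hz: "Hmat N E *\<^sub>v z \<in> carrier_vec m" using mult_mat_vec_carrier[OF Hmat_carrier assms(3)] .
  have "Wmat N E i j *\<^sub>v (Hmat N E *\<^sub>v z) = Hmat N E *\<^sub>v z"
    using assms by (intro W_mult_vec_consensus Hz) (auto simp: ind_def H_mult_vec_slot)
  then show ?thesis
    using Hz by (simp add: Q_mult_vec Hbar_H_mult_vec assms(3))
qed

lemma EQTQ_mult_vec_index:
  assumes "v \<in> carrier_vec m" "r < m"
  shows "(EQTQ N E C *\<^sub>v v) $ r = (\<Sum>i=1..N. \<Sum>j\<in>nbr N C i.
    1 / (N * card (nbr N C i)) * ((transpose_mat (Qmat N E i j) * Qmat N E i j) *\<^sub>v v) $ r)"
proof -
  let ?M = "\<lambda>i j. transpose_mat (Qmat N E i j) * Qmat N E i j"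
  let ?p = "\<lambda>i. 1 / (N * card (nbr N C i))"
  have M: "?M i j \<in> carrier_mat m m" for i j
    by (meson Qmat_carrier mult_carrier_mat transpose_carrier_mat)
  have "(EQTQ N E C *\<^sub>v v) $ r = (\<Sum>c<m. \<Sum>i=1..N. \<Sum>j\<in>nbr N C i. ?p i * (?M i j $$ (r, c) * v $ c))"
    using assms by (subst mult_mat_vec_index_sum[OF EQTQ_carrier])
      (auto simp: EQTQ_def sum_distrib_right mult.assoc intro!: sum.cong)
  also have "\<dots> = (\<Sum>i=1..N. \<Sum>j\<in>nbr N C i. \<Sum>c<m. ?p i * (?M i j $$ (r, c) * v $ c))"
    by (subst sum.swap) (simp add: sum.swap[of _ "nbr N C _"])
  also have "\<dots> = (\<Sum>i=1..N. \<Sum>j\<in>nbr N C i. ?p i * (?M i j *\<^sub>v v) $ r)"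
    by (simp add: mult_mat_vec_index_sum[OF M assms] sum_distrib_left)
  finally show ?thesis .
qed

lemma EQTQ_quadratic_form:
  assumes "v \<in> carrier_vec m"
  shows "(\<Sum>r<m. v $ r * (EQTQ N E C *\<^sub>v v) $ r) = (\<Sum>i=1..N. \<Sum>j\<in>nbr N C i.
    1 / (N * card (nbr N C i)) * (\<Sum>r<m. ((Qmat N E i j *\<^sub>v v) $ r)\<^sup>2))"
proof -
  let ?M = "\<lambda>i j. transpose_mat (Qmat N E i j) * Qmat N E i j"
  have "(\<Sum>r<m. v $ r * (EQTQ N E C *\<^sub>v v) $ r)
      = (\<Sum>r<m. \<Sum>i=1..N. \<Sum>j\<in>nbr N C i. 1 / (N * card (nbr N C i)) * (v $ r * (?M i j *\<^sub>v v) $ r))"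
    using assms by (simp add: EQTQ_mult_vec_index sum_distrib_left mult_ac)
  also have "\<dots> = (\<Sum>i=1..N. \<Sum>j\<in>nbr N C i. 1 / (N * card (nbr N C i)) * (\<Sum>r<m. v $ r * (?M i j *\<^sub>v v) $ r))"
    by (subst sum.swap) (simp add: sum.swap[of _ "nbr N C _"] sum_distrib_left)
  finally show ?thesis
    using quadratic_form_transpose_mult[OF Qmat_carrier assms] by simp
qed

lemma EQTQ_eigenvalue_0:
  assumes "1 \<le> N"
  shows "eigenvalue (EQTQ N E C) 0"
proof -
  define z :: "real vec" where "z = unit_vec N 0"
  define x where "x = Hmat N E *\<^sub>v z"
  have z: "z \<in> carrier_vec N" unfolding z_def by simp
  have x: "x \<in> carrier_vec m" unfolding x_def using mult_mat_vec_carrier[OF Hmat_carrier z] .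
  have QTQ_x: "((transpose_mat (Qmat N E i j) * Qmat N E i j) *\<^sub>v x) = 0\<^sub>v m"
    if "i \<in> {1..N}" "j \<in> nbr N C i" for i j
  proof -
    have "Qmat N E i j *\<^sub>v x = 0\<^sub>v m"
      using that Q_mult_H_vec[OF _ _ z, of i j] by (auto simp: x_def nbr_def)
    moreover have "transpose_mat (Qmat N E i j) *\<^sub>v 0\<^sub>v m = 0\<^sub>v m"
      by (intro eq_vecI) (auto simp: carrier_matD[OF Qmat_carrier])
    ultimately show ?thesis using x by (simp add: assoc_mult_mat_vec[of _ m m _ m])
  qed
  have "EQTQ N E C *\<^sub>v x = 0 \<cdot>\<^sub>v x"
  proof (intro eq_vecI)
    fix r assume "r < dim_vec (0 \<cdot>\<^sub>v x)"
    then have "r < m" using x by simp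
    then show "(EQTQ N E C *\<^sub>v x) $ r = (0 \<cdot>\<^sub>v x) $ r"
      using x QTQ_x by (subst EQTQ_mult_vec_index) simp_all
  qed (use x in \<open>simp add: carrier_matD[OF EQTQ_carrier]\<close>)
  moreover have "x $ slot 1 1 = 1"
    using assms H_mult_vec_slot[OF _ self_mem_cnbr z] unfolding x_def z_def by simp
  then have "x \<noteq> 0\<^sub>v m" using slot_lt_m[OF _ self_mem_cnbr, of 1] assms by auto
  ultimately show ?thesis
    using x unfolding eigenvalue_def eigenvector_def by (auto simp: EQTQ_def)
qed

end

locale gossip = ugraph +
  fixes M C :: "nat \<Rightarrow> nat \<Rightarrow> bool"
  assumes N_ge_2: "2 \<le> N"
    and connected: "connected_graph N E"
    and maximal_M: "maximal_triangle_free_spanning_subgraph N M E"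
    and undirected_C: "undirected_graph N C"
    and M_le_C: "\<forall>i j. M i j \<longrightarrow> C i j"
    and C_le_E: "\<forall>i j. C i j \<longrightarrow> E i j"
begin

lemma C_range: "C i j \<Longrightarrow> i \<in> {1..N} \<and> j \<in> {1..N} \<and> i \<noteq> j"
  using undirected_C unfolding undirected_graph_def by blast

lemma mem_nbr_C_iff: "j \<in> nbr N C i \<longleftrightarrow> C i j"
  using C_range unfolding nbr_def by blast

lemma E_edge_is_M_path:
  assumes "E a b" shows "M a b \<or> (\<exists>c. M a c \<and> M c b)"
  using assms maximal_M unfolding maximal_triangle_free_spanning_subgraph_def by blast

lemma M_le_E: "M a b \<Longrightarrow> E a b"
  using M_le_C C_le_E by blast

lemma exists_C_edge: "\<exists>a b. C a b"
proof -
  have "E\<^sup>*\<^sup>* 1 2" using connected N_ge_2 unfolding connected_graph_def by auto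
  then obtain b where "E 1 b" by (cases rule: converse_rtranclpE) auto
  then show ?thesis using E_edge_is_M_path M_le_C by blast
qed

text \<open>Where the maximality of the triangle-free subgraph enters: every edge \<open>l\<midarrow>i\<close> of \<open>G\<^sub>I\<close> is an
  edge \<open>l\<midarrow>i\<close> or a path \<open>l\<midarrow>c\<midarrow>i\<close> of \<open>G\<^sub>m \<subseteq> G\<^sub>C\<close>, and \<open>l\<close> lies in the closed neighbourhood
  of each vertex on it.\<close>

lemma copies_agree:
  assumes agree: "\<And>a b l. C a b \<Longrightarrow> l \<in> cnbr N E a \<Longrightarrow> l \<in> cnbr N E b \<Longrightarrow> f a l = f b l"
    and l: "l \<in> {1..N}" and i: "i \<in> cnbr N E l"
  shows "f i l = f l l"
proof (cases "i = l")
  case False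
  then have "E l i" using mem_cnbr_iff[OF l] i by simp
  then have l_in_i: "l \<in> cnbr N E i"
    using mem_cnbr_iff[of i l] E_range[OF \<open>E l i\<close>] E_sym[OF \<open>E l i\<close>] by simp
  consider "M l i" | c where "M l c" "M c i" using E_edge_is_M_path[OF \<open>E l i\<close>] by blast
  then show ?thesis
  proof cases
    case 1
    then show ?thesis using agree[OF _ self_mem_cnbr l_in_i] M_le_C by simp
  next
    case 2
    then have "E c l" using M_le_E E_sym by blast
    then have "l \<in> cnbr N E c" using mem_cnbr_iff[of c l] E_range by simp
    then show ?thesis
      using agree[OF _ self_mem_cnbr, of l c] agree[of c i l] 2 l_in_i M_le_C by simp
  qed
qed simp

lemma large_eigenvector_loss_free:
  assumes ev: "eigenvector (EQTQ N E C) v k" and "1 \<le> k" and ij: "C i j"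
  shows "(\<forall>l\<in>ind N E i j. v $ slot i l = v $ slot j l)
    \<and> (\<forall>l\<in>{1..N}. copy_mean (Wmat N E i j *\<^sub>v v) l = 0)"
proof -
  have v: "v \<in> carrier_vec m" and Ev: "EQTQ N E C *\<^sub>v v = k \<cdot>\<^sub>v v"
    using ev unfolding eigenvector_def by (simp_all add: carrier_matD[OF EQTQ_carrier])
  define p where "p i j = 1 / (N * card (nbr N C i))" for i j :: nat
  define A where "A i j = (\<Sum>l\<in>ind N E i j. (v $ slot i l - v $ slot j l)\<^sup>2)" for i j
  define B where "B i j = (\<Sum>l=1..N. mdeg N E l * (copy_mean (Wmat N E i j *\<^sub>v v) l)\<^sup>2)" for i j
  define n where "n = (\<Sum>r<m. (v $ r)\<^sup>2)"
  have finite_nbr: "finite (nbr N C i)" for i unfolding nbr_def by simp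
  have loss: "(\<Sum>r<m. ((Qmat N E i j *\<^sub>v v) $ r)\<^sup>2) = n - (1/2 * A i j + B i j)"
    if "C i j" for i j
    using C_range[OF that] Q_sq_norm[OF _ _ _ v, of i j] by (simp add: A_def B_def n_def)
  have "k * n = (\<Sum>r<m. v $ r * (EQTQ N E C *\<^sub>v v) $ r)"
    unfolding Ev n_def using v by (simp add: sum_distrib_left power2_eq_square mult_ac)
  also have "\<dots> = (\<Sum>i\<in>{1..N}. \<Sum>j\<in>nbr N C i. p i j * (n - (1/2 * A i j + B i j)))"
    unfolding EQTQ_quadratic_form[OF v] p_def by (intro sum.cong refl) (simp add: loss mem_nbr_C_iff)
  finally have balance: "k * n = \<dots>" .
  have p_pos: "p i j > 0" if "j \<in> nbr N C i" for i j
    using sampling_weight_pos[OF _ that] N_ge_2 unfolding p_def by simp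
  have p_sum: "(\<Sum>i\<in>{1..N}. \<Sum>j\<in>nbr N C i. p i j) \<le> 1"
    using sampling_weights_sum_le_1 N_ge_2 unfolding p_def by simp
  have A_nonneg: "A i j \<ge> 0" and B_nonneg: "B i j \<ge> 0" for i j
    unfolding A_def B_def by (auto intro!: sum_nonneg)
  have "n \<ge> 0" unfolding n_def by (auto intro!: sum_nonneg)
  have "1/2 * A i j + B i j = 0"
    using sum_sum_pos_weights_deficits_eq_0[where D = "\<lambda>i j. 1/2 * A i j + B i j",
        OF _ finite_nbr p_pos _ p_sum \<open>1 \<le> k\<close> \<open>n \<ge> 0\<close> balance] A_nonneg B_nonneg ij C_range[OF ij]
    by (simp add: mem_nbr_C_iff)
  then have "A i j = 0" "B i j = 0" using A_nonneg[of i j] B_nonneg[of i j] by linarith+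
  moreover have "finite (ind N E i j)" unfolding ind_def by simp
  ultimately show ?thesis
    unfolding A_def B_def using mdeg_pos by (simp add: sum_nonneg_eq_0_iff less_not_refl2)
qed

lemma eigenvalue_EQTQ_lt_1:
  assumes "eigenvalue (EQTQ N E C) k"
  shows "k < 1"
proof (rule ccontr)
  assume "\<not> k < 1"
  obtain v where ev: "eigenvector (EQTQ N E C) v k"
    using assms unfolding eigenvalue_def by blast
  then have v: "v \<in> carrier_vec m" and v_nz: "v \<noteq> 0\<^sub>v m"
    unfolding eigenvector_def by (simp_all add: carrier_matD[OF EQTQ_carrier])
  have agree: "v $ slot a l = v $ slot b l"
    if "C a b" "l \<in> cnbr N E a" "l \<in> cnbr N E b" for a b l
    using large_eigenvector_loss_free[OF ev _ that(1)] \<open>\<not> k < 1\<close> that by (simp add: ind_def)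
  obtain a b where ab: "C a b" using exists_C_edge by blast
  then have "Wmat N E a b *\<^sub>v v = v"
    using C_range agree v by (intro W_mult_vec_consensus) (auto simp: ind_def)
  then have mean_0: "copy_mean v l = 0" if "l \<in> {1..N}" for l
    using large_eigenvector_loss_free[OF ev _ ab] \<open>\<not> k < 1\<close> that by simp
  have "v $ slot i l = 0" if i: "i \<in> {1..N}" and l_i: "l \<in> cnbr N E i" for i l
  proof -
    have l: "l \<in> {1..N}" using cnbr_subset[OF i] l_i by blast
    have same: "v $ slot i' l = v $ slot l l" if "i' \<in> cnbr N E l" for i'
      using copies_agree[of "\<lambda>i l. v $ slot i l", OF agree l that] by simp
    then have "copy_mean v l = v $ slot l l"
      using mdeg_pos[of l] by (simp add: copy_mean_def card_cnbr)
    then show ?thesis using mean_0[OF l] same[OF cnbr_sym[OF i l_i]] by simp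
  qed
  then have "v = 0\<^sub>v m" using v by (rule slot_vec_eq_zeroI[rotated])
  with v_nz show False ..
qed

end

theorem lemma6:
  fixes N :: nat and EI EC EM :: "nat \<Rightarrow> nat \<Rightarrow> bool"
  assumes "N \<ge> 2"
    and "undirected_graph N EI"
    and "connected_graph N EI"
    and "\<not> complete_graph N EI"
    and "maximal_triangle_free_spanning_subgraph N EM EI"
    and "undirected_graph N EC"
    and "\<forall>i j. EM i j \<longrightarrow> EC i j"
    and "\<forall>i j. EC i j \<longrightarrow> EI i j"
  shows "lambda_max (EQTQ N EI EC) < 1"
proof -
  interpret gossip N EI EM EC
    by unfold_locales (use assms in auto)
  let ?spectrum = "{k. eigenvalue (EQTQ N EI EC) k}"
  have "finite ?spectrum" by (rule finite_eigenvalues[OF EQTQ_carrier])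
  moreover have "0 \<in> ?spectrum" using EQTQ_eigenvalue_0 assms(1) by simp
  ultimately have "lambda_max (EQTQ N EI EC) \<in> ?spectrum"
    unfolding lambda_max_def by (intro Max_in) auto
  then show ?thesis using eigenvalue_EQTQ_lt_1 by simp
qed

end
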